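(* Assume (A1) differentiability, (A2) convexity, (A3) $\mu$-strong convexity of $f$, (SS) Star Similarity with constant $\delta_*>0$ (with respect to the minimizer $x_*$ of $f$), and (BV) bounded variance at the optimum with constant $\sigma_*^2$. If $0<\gamma\le\frac{\mu}{4\delta_*^2}$, then the iterates of SPPM satisfy, for every $k\ge0$, $$\mathbb{E}\big[\|x_k-x_*\|^2\big]\le\left(1-\frac12\min\Big(\frac{\gamma\mu}{2},1\Big)\right)^k\|x_0-x_*\|^2+4\max\Big(\frac{2}{\gamma\mu},1\Big)\gamma^2\sigma_*^2 .$$
   Context: Setting: $\mathcal{D}$ is a probability distribution over samples $\xi$; for each $\xi$, $f_\xi:\mathbb{R}^d\to\mathbb{R}$; $f(x)=\mathbb{E}_{\xi\sim\mathcal{D}}[f_\xi(x)]$, with $\nabla f(x)=\mathbb{E}[\nabla f_\xi(x)]$. Assumptions: (A1) $f_\xi$ differentiable for $\mathcal{D}$-a.e. $\xi$; (A2) $f_\xi$ convex for $\mathcal{D}$-a.e. $\xi$; (A3) $f(x)\ge f(y)+\langle\nabla f(y),x-y\rangle+\frac\mu2\|x-y\|^2$ for all $x,y$; (SS) (Star Similarity) there exist a minimizer $x_*$ of $f$ and $\delta_*>0$ with $\mathbb{E}_{\xi}\big[\|\nabla f_\xi(x)-\nabla f(x)-\nabla f_\xi(x_* )\|^2\big]\le\delta_*^2\|x-x_*\|^2$ for all $x$; (BV) $\mathbb{E}_{\xi\sim\mathcal{D}}[\|\nabla f_\xi(x_* )\|^2]\le\sigma_*^2$. No interpolation is assumed.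 SPPM: given $\gamma>0$, $x_0$, and i.i.d. $\xi_0,\xi_1,\dots\sim\mathcal{D}$, set $x_{k+1}=\arg\min_{z}\{f_{\xi_k}(z)+\frac{1}{2\gamma}\|z-x_k\|^2\}$. *)

theory Defs
  imports "HOL-Analysis.Analysis" "HOL-Probability.Probability"
begin

text \<open>Proximal operator: prox_gamma_h(x) = argmin_z { h z + 1/(2 gamma) ||z - x||^2 }.
  (For convex differentiable h and gamma > 0 the minimizer exists and is unique.)\<close>
definition prox :: "real \<Rightarrow> ('a::real_normed_vector \<Rightarrow> real) \<Rightarrow> 'a \<Rightarrow> 'a" where
  "prox \<gamma> h x = (SOME z. \<forall>w. h z + (norm (z - x))\<^sup>2 / (2 * \<gamma>) \<le> h w + (norm (w - x))\<^sup>2 / (2 * \<gamma>))"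

text \<open>SPPM iterates driven by the sample sequence \<omega> = (xi_0, xi_1, ...):
  x_0 = x0,  x_(k+1) = prox_(gamma f_(xi_k)) (x_k).  x_k depends only on xi_0..xi_(k-1).\<close>
fun sppm :: "real \<Rightarrow> ('b \<Rightarrow> 'a::real_normed_vector \<Rightarrow> real) \<Rightarrow> 'a \<Rightarrow> (nat \<Rightarrow> 'b) \<Rightarrow> nat \<Rightarrow> 'a" where
  "sppm \<gamma> f x0 \<omega> 0 = x0"
| "sppm \<gamma> f x0 \<omega> (Suc k) = prox \<gamma> (f (\<omega> k)) (sppm \<gamma> f x0 \<omega> k)"

end

theory Submission
  imports Defs
begin

text \<open>Fix an iterate \<open>x\<close> and let \<open>z\<close> be the (deterministic) proximal point of \<open>F\<close> at \<open>x\<close>, so that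
  \<open>\<gamma> \<nabla>F(z) = x - z\<close>. The three-point property of the proximal map of the convex \<open>f\<^sub>\<xi>\<close>,
  combined with the gradient inequality of \<open>f\<^sub>\<xi>\<close> at \<open>z\<close>, gives
  \<open>\<parallel>x\<^sup>+ - x\<^sub>*\<parallel>\<^sup>2 \<le> \<parallel>x - x\<^sub>*\<parallel>\<^sup>2 - \<parallel>x - z\<parallel>\<^sup>2 - 2\<gamma>(f\<^sub>\<xi>(z) - f\<^sub>\<xi>(x\<^sub>*)) + \<gamma>\<^sup>2\<parallel>\<nabla>f\<^sub>\<xi>(z) - \<nabla>F(z)\<parallel>\<^sup>2\<close>.
  In expectation, strong convexity turns the middle term into \<open>-\<gamma>\<mu>\<parallel>z - x\<^sub>*\<parallel>\<^sup>2\<close>, while star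
  similarity and the variance bound give \<open>2\<delta>\<^sup>2\<parallel>z - x\<^sub>*\<parallel>\<^sup>2 + 2\<sigma>\<^sup>2\<close> for the noise; for
  \<open>\<gamma> \<le> \<mu>/(4\<delta>\<^sup>2)\<close> half of the strong convexity gain survives, and the triangle inequality through
  \<open>z\<close> yields the one-step contraction \<open>(1 - \<rho>) \<parallel>x - x\<^sub>*\<parallel>\<^sup>2 + 2\<gamma>\<^sup>2\<sigma>\<^sup>2\<close> with
  \<open>\<rho> = min(\<gamma>\<mu>/2, 1)/2\<close>. Unrolling the recursion and bounding the geometric series by \<open>1/\<rho>\<close> gives
  the theorem.\<close>

lemma convex_on_gradient_inequality:
  fixes h :: "'a::real_inner \<Rightarrow> real"
  assumes cvx: "convex_on UNIV h" and der: "(h has_derivative (\<lambda>v. inner v d)) (at c)"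
  shows "h c + inner (w - c) d \<le> h w"
proof -
  define \<phi> where "\<phi> = (\<lambda>t::real. h (c + t *\<^sub>R (w - c)))"
  have "convex_on UNIV \<phi>"
  proof (rule convex_onI)
    fix t a b :: real assume t: "t > 0" "t < 1"
    have "c + ((1 - t) * a + t * b) *\<^sub>R (w - c)
        = (1 - t) *\<^sub>R (c + a *\<^sub>R (w - c)) + t *\<^sub>R (c + b *\<^sub>R (w - c))"
      by (simp add: algebra_simps)
    then show "\<phi> ((1 - t) *\<^sub>R a + t *\<^sub>R b) \<le> (1 - t) * \<phi> a + t * \<phi> b"
      unfolding \<phi>_def using convex_onD[OF cvx, of t] t by simp
  qed simp
  moreover have "(\<phi> has_field_derivative inner (w - c) d) (at 0)"
  proof -
    have "((\<lambda>t. c + t *\<^sub>R (w - c)) has_derivative (\<lambda>t. t *\<^sub>R (w - c))) (at 0)"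
      by (auto intro!: derivative_eq_intros)
    moreover have "(h has_derivative (\<lambda>v. inner v d)) (at (c + 0 *\<^sub>R (w - c)))"
      using der by simp
    ultimately have "(\<phi> has_derivative (\<lambda>t. inner (t *\<^sub>R (w - c)) d)) (at 0)"
      using has_derivative_compose[of "\<lambda>t. c + t *\<^sub>R (w - c)" "\<lambda>t. t *\<^sub>R (w - c)" 0 UNIV h
          "\<lambda>v. inner v d"]
      by (simp add: \<phi>_def o_def)
    then show ?thesis
      unfolding has_field_derivative_def
      by (rule has_derivative_eq_rhs) (auto simp: fun_eq_iff mult.commute)
  qed
  ultimately have "inner (w - c) d * (1 - 0) \<le> \<phi> 1 - \<phi> 0"
    using convex_on_imp_above_tangent[of UNIV \<phi> 0 1] by simp
  then show ?thesis unfolding \<phi>_def by simp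
qed

lemma gradient_eq_0_at_min:
  fixes h :: "'a::real_inner \<Rightarrow> real"
  assumes "(h has_derivative (\<lambda>v. inner v d)) (at z)" and "\<And>w. h z \<le> h w"
  shows "d = 0"
proof -
  have "(\<lambda>v. inner v d) = (\<lambda>v. 0)"
    using has_derivative_local_min[OF assms(1)] assms(2) by (simp add: always_eventually)
  then have "inner d d = 0" by meson
  then show ?thesis by simp
qed

lemma quadratic_growth_attains_min:
  fixes \<phi> :: "'a::euclidean_space \<Rightarrow> real"
  assumes cont: "continuous_on UNIV \<phi>" and c: "c > 0"
    and lb: "\<And>w. a - b * norm (w - x) + c * (norm (w - x))\<^sup>2 \<le> \<phi> w"
  shows "\<exists>z. \<forall>w. \<phi> z \<le> \<phi> w"
proof -
  define R where "R = (\<bar>b\<bar> + \<bar>\<phi> x - a\<bar>) / c + 1"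
  have R1: "R \<ge> 1" unfolding R_def using c by simp
  obtain z where z: "\<forall>y\<in>cball x R. \<phi> z \<le> \<phi> y"
    using continuous_attains_inf[of "cball x R" \<phi>] continuous_on_subset[OF cont] R1 by auto
  have "\<phi> z \<le> \<phi> w" for w
  proof (cases "w \<in> cball x R")
    case False
    define r where "r = norm (w - x)"
    have rR: "r > R" using False unfolding r_def by (simp add: dist_norm norm_minus_commute)
    have "c * R = \<bar>b\<bar> + \<bar>\<phi> x - a\<bar> + c" unfolding R_def using c by (simp add: field_simps)
    moreover have "c * r \<ge> c * R" using rR c by simp
    ultimately have cr: "c * r - b \<ge> \<bar>\<phi> x - a\<bar> + c" by linarith
    have "r * (c * r - b) \<ge> 1 * (c * r - b)"
      using rR R1 cr c by (intro mult_right_mono) auto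
    then have "c * r\<^sup>2 - b * r > \<phi> x - a" using cr c by (simp add: power2_eq_square algebra_simps)
    then have "\<phi> x < \<phi> w" using lb[of w] unfolding r_def by simp
    moreover have "\<phi> z \<le> \<phi> x" using z R1 by simp
    ultimately show ?thesis by linarith
  qed (use z in blast)
  then show ?thesis by blast
qed

lemma prox_objective_attains_min:
  fixes h :: "'a::euclidean_space \<Rightarrow> real"
  assumes cont: "continuous_on UNIV h" and affine_lb: "\<And>w. h x + inner (w - x) c \<le> h w"
    and \<gamma>: "\<gamma> > 0"
  shows "\<exists>z. \<forall>w. h z + (norm (z - x))\<^sup>2 / (2 * \<gamma>) \<le> h w + (norm (w - x))\<^sup>2 / (2 * \<gamma>)"
proof (rule quadratic_growth_attains_min[where c = "1 / (2 * \<gamma>)" and a = "h x" and b = "norm c"])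
  show "continuous_on UNIV (\<lambda>z. h z + (norm (z - x))\<^sup>2 / (2 * \<gamma>))"
    using \<gamma> by (intro continuous_intros cont) auto
  fix w
  have "- (norm c * norm (w - x)) \<le> inner (w - x) c"
    using norm_cauchy_schwarz[of "x - w" c] by (simp add: norm_minus_commute algebra_simps)
  with affine_lb[of w] show "h x - norm c * norm (w - x) + 1 / (2 * \<gamma>) * (norm (w - x))\<^sup>2
      \<le> h w + (norm (w - x))\<^sup>2 / (2 * \<gamma>)" by simp
qed (use \<gamma> in simp)

lemma prox_minimizes:
  fixes h :: "'a::euclidean_space \<Rightarrow> real"
  assumes cvx: "convex_on UNIV h" and der: "\<And>v. (h has_derivative (\<lambda>u. inner u (dh v))) (at v)"
    and \<gamma>: "\<gamma> > 0"
  shows "h (prox \<gamma> h x) + (norm (prox \<gamma> h x - x))\<^sup>2 / (2 * \<gamma>) \<le> h w + (norm (w - x))\<^sup>2 / (2 * \<gamma>)"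
proof -
  have "continuous_on UNIV h"
    using der by (meson continuous_at_imp_continuous_on has_derivative_continuous)
  from prox_objective_attains_min[OF this convex_on_gradient_inequality[OF cvx der] \<gamma>]
  have "\<forall>w. h (prox \<gamma> h x) + (norm (prox \<gamma> h x - x))\<^sup>2 / (2 * \<gamma>) \<le> h w + (norm (w - x))\<^sup>2 / (2 * \<gamma>)"
    unfolding prox_def by (rule someI_ex)
  then show ?thesis by blast
qed

lemma nonneg_if_nonneg_add_small_multiples:
  fixes A B :: real
  assumes "\<And>t. 0 < t \<Longrightarrow> t \<le> 1 \<Longrightarrow> 0 \<le> A + t * B"
  shows "0 \<le> A"
proof (rule ccontr)
  assume A: "\<not> 0 \<le> A"
  define B' where "B' = \<bar>B\<bar> + 1"
  define t where "t = min 1 (- A / (2 * B'))"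
  have B': "B' > 0" unfolding B'_def by simp
  have t: "0 < t" "t \<le> 1" unfolding t_def using A B' by (auto simp: divide_neg_pos)
  have "t * B \<le> t * B'" unfolding B'_def using t by (intro mult_left_mono) auto
  also have "\<dots> \<le> (- A / (2 * B')) * B'" unfolding t_def using B' by (intro mult_right_mono) auto
  also have "\<dots> = - A / 2" using B' by simp
  finally show False using assms[OF t] A by linarith
qed

text \<open>Minimality of \<open>y\<close> against the points of the segment from \<open>y\<close> to \<open>w\<close>, together with
  convexity, gives \<open>0 \<le> A + t B\<close> for all \<open>t \<in> (0,1]\<close>; letting \<open>t\<close> tend to \<open>0\<close> yields \<open>A \<ge> 0\<close>.\<close>
lemma prox_three_point:
  fixes h :: "'a::real_inner \<Rightarrow> real"
  assumes cvx: "convex_on UNIV h" and \<gamma>: "\<gamma> > 0"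
    and min: "\<And>v. h y + (norm (y - x))\<^sup>2 / (2 * \<gamma>) \<le> h v + (norm (v - x))\<^sup>2 / (2 * \<gamma>)"
  shows "h y + (norm (y - x))\<^sup>2 / (2 * \<gamma>) + (norm (w - y))\<^sup>2 / (2 * \<gamma>)
      \<le> h w + (norm (w - x))\<^sup>2 / (2 * \<gamma>)"
proof -
  define d where "d = w - y"
  define A where "A = h w - h y + inner (y - x) d / \<gamma>"
  define B where "B = (norm d)\<^sup>2 / (2 * \<gamma>)"
  have "0 \<le> A + t * B" if t: "0 < t" "t \<le> 1" for t
  proof -
    have "y + t *\<^sub>R d = (1 - t) *\<^sub>R y + t *\<^sub>R w" unfolding d_def by (simp add: algebra_simps)
    then have cvx_t: "h (y + t *\<^sub>R d) \<le> (1 - t) * h y + t * h w"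
      using convex_onD[OF cvx, of t y w] t by simp
    have "y + t *\<^sub>R d - x = (y - x) + t *\<^sub>R d" by simp
    then have sq_t: "(norm (y + t *\<^sub>R d - x))\<^sup>2
        = (norm (y - x))\<^sup>2 + 2 * t * inner (y - x) d + t\<^sup>2 * (norm d)\<^sup>2"
      by (simp only: power2_norm_eq_inner inner_add_left inner_add_right inner_scaleR_left
          inner_scaleR_right inner_commute[of d "y - x"]) (simp add: power2_eq_square algebra_simps)
    have "h y + (norm (y - x))\<^sup>2 / (2 * \<gamma>) \<le> h (y + t *\<^sub>R d) + (norm (y + t *\<^sub>R d - x))\<^sup>2 / (2 * \<gamma>)"
      by (rule min)
    also have "\<dots> \<le> (1 - t) * h y + t * h w
        + ((norm (y - x))\<^sup>2 + 2 * t * inner (y - x) d + t\<^sup>2 * (norm d)\<^sup>2) / (2 * \<gamma>)"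
      using cvx_t unfolding sq_t by simp
    also have "\<dots> = h y + (norm (y - x))\<^sup>2 / (2 * \<gamma>) + t * (A + t * B)"
      unfolding A_def B_def using \<gamma> by (simp add: field_simps power2_eq_square)
    finally show ?thesis using t by (simp add: zero_le_mult_iff)
  qed
  then have "0 \<le> A" by (rule nonneg_if_nonneg_add_small_multiples)
  moreover have "(norm (w - x))\<^sup>2 = (norm d)\<^sup>2 + 2 * inner (y - x) d + (norm (y - x))\<^sup>2"
    unfolding d_def
    by (simp add: power2_norm_eq_inner inner_commute algebra_simps)
  then have "h w + (norm (w - x))\<^sup>2 / (2 * \<gamma>)
      - (h y + (norm (y - x))\<^sup>2 / (2 * \<gamma>) + (norm (w - y))\<^sup>2 / (2 * \<gamma>)) = A"
    unfolding A_def d_def using \<gamma> by (simp add: field_simps)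
  ultimately show ?thesis by linarith
qed

lemma prox_optimality_condition:
  fixes h :: "'a::real_inner \<Rightarrow> real"
  assumes der: "(h has_derivative (\<lambda>v. inner v d)) (at z)" and \<gamma>: "\<gamma> > 0"
    and min: "\<And>w. h z + (norm (z - x))\<^sup>2 / (2 * \<gamma>) \<le> h w + (norm (w - x))\<^sup>2 / (2 * \<gamma>)"
  shows "d = (1 / \<gamma>) *\<^sub>R (x - z)"
proof -
  define c where "c = 1 / (2 * \<gamma>)"
  have obj: "h w + (norm (w - x))\<^sup>2 / (2 * \<gamma>) = h w + c * inner (w - x) (w - x)" for w
    by (simp add: power2_norm_eq_inner c_def)
  have "((\<lambda>w. inner (w - x) (w - x)) has_derivative (\<lambda>v. inner (z - x) v + inner v (z - x))) (at z)"
    by (auto intro!: derivative_eq_intros)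
  from has_derivative_add[OF der has_derivative_mult_right[OF this, of c]]
  have "((\<lambda>w. h w + c * inner (w - x) (w - x)) has_derivative
      (\<lambda>v. inner v d + c * (inner (z - x) v + inner v (z - x)))) (at z)" .
  moreover have "(\<lambda>v. inner v d + c * (inner (z - x) v + inner v (z - x)))
      = (\<lambda>v. inner v (d + (1 / \<gamma>) *\<^sub>R (z - x)))"
  proof
    fix v
    show "inner v d + c * (inner (z - x) v + inner v (z - x)) = inner v (d + (1 / \<gamma>) *\<^sub>R (z - x))"
      unfolding c_def using \<gamma> inner_commute[of "z - x" v]
      by (simp only: inner_add_right inner_scaleR_right) (simp add: field_simps)
  qed
  ultimately have "((\<lambda>w. h w + c * inner (w - x) (w - x)) has_derivative
      (\<lambda>v. inner v (d + (1 / \<gamma>) *\<^sub>R (z - x)))) (at z)"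
    by simp
  then have "d + (1 / \<gamma>) *\<^sub>R (z - x) = 0"
    by (rule gradient_eq_0_at_min) (metis min obj)
  then show ?thesis by (simp add: algebra_simps)
qed

lemma three_point_identity:
  fixes x y z v :: "'a::real_inner"
  shows "(norm (y - x))\<^sup>2 + 2 * inner (y - z) v
    = (norm (x - z))\<^sup>2 - (norm (v - (x - z)))\<^sup>2 + (norm (y - x + v))\<^sup>2"
  by (simp add: power2_norm_eq_inner inner_commute algebra_simps)

text \<open>The point \<open>z\<close> is arbitrary; the SPPM step below takes the proximal point of \<open>F\<close>,
  at which \<open>\<gamma> \<nabla>F(z) = x - z\<close>, so that the last term becomes \<open>\<gamma>\<^sup>2\<close> times the gradient noise.\<close>
lemma prox_sq_dist_le:
  fixes h :: "'a::euclidean_space \<Rightarrow> real"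
  assumes cvx: "convex_on UNIV h" and der: "\<And>v. (h has_derivative (\<lambda>w. inner w (dh v))) (at v)"
    and \<gamma>: "\<gamma> > 0"
  shows "(norm (prox \<gamma> h x - u))\<^sup>2 \<le> (norm (x - u))\<^sup>2 - (norm (x - z))\<^sup>2 - 2 * \<gamma> * (h z - h u)
      + (norm (\<gamma> *\<^sub>R dh z - (x - z)))\<^sup>2"
proof -
  define y where "y = prox \<gamma> h x"
  have "h y + (norm (y - x))\<^sup>2 / (2 * \<gamma>) + (norm (u - y))\<^sup>2 / (2 * \<gamma>)
      \<le> h u + (norm (u - x))\<^sup>2 / (2 * \<gamma>)"
    unfolding y_def using cvx \<gamma> by (rule prox_three_point) (rule prox_minimizes[OF cvx der \<gamma>])
  from mult_left_mono[OF this, of "2 * \<gamma>"]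
  have three_point: "(norm (y - x))\<^sup>2 + (norm (y - u))\<^sup>2 + 2 * \<gamma> * h y
      \<le> 2 * \<gamma> * h u + (norm (x - u))\<^sup>2"
    using \<gamma> by (simp add: distrib_left norm_minus_commute)
  have "h z + inner (y - z) (dh z) \<le> h y" by (rule convex_on_gradient_inequality[OF cvx der])
  from mult_left_mono[OF this, of "2 * \<gamma>"]
  have "2 * \<gamma> * h z + 2 * inner (y - z) (\<gamma> *\<^sub>R dh z) \<le> 2 * \<gamma> * h y"
    using \<gamma> by (simp add: distrib_left)
  moreover have "0 \<le> (norm (y - x + \<gamma> *\<^sub>R dh z))\<^sup>2" by simp
  moreover have "2 * \<gamma> * (h z - h u) = 2 * \<gamma> * h z - 2 * \<gamma> * h u"
    by (simp add: algebra_simps)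
  ultimately show ?thesis
    using three_point three_point_identity[of y x z "\<gamma> *\<^sub>R dh z"] unfolding y_def
    by linarith
qed

lemma power2_norm_add_le:
  fixes a b :: "'a::real_normed_vector"
  shows "(norm (a + b))\<^sup>2 \<le> 2 * (norm a)\<^sup>2 + 2 * (norm b)\<^sup>2"
proof -
  have "(norm (a + b))\<^sup>2 \<le> (norm a + norm b)\<^sup>2"
    by (simp add: power_mono norm_triangle_ineq)
  also have "\<dots> \<le> 2 * (norm a)\<^sup>2 + 2 * (norm b)\<^sup>2"
    using zero_le_power2[of "norm a - norm b"] by (simp add: power2_eq_square algebra_simps)
  finally show ?thesis .
qed

lemma weighted_triangle_sq_bound:
  fixes c p q r :: real
  assumes c: "c > 0" and tri: "r \<le> p + q" "r \<ge> 0"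
  shows "1/2 * min c 1 * r\<^sup>2 \<le> p\<^sup>2 + c * q\<^sup>2"
proof -
  define m where "m = 1/2 * min c 1"
  have m: "0 \<le> m" "m * (1 + c) \<le> c"
    unfolding m_def using c by (auto simp: min_def)
  have "(1 + c) * (m * (p + q)\<^sup>2) \<le> c * (p + q)\<^sup>2"
    using mult_right_mono[OF m(2) zero_le_power2[of "p + q"]] by (simp add: algebra_simps)
  also have "\<dots> \<le> (1 + c) * (p\<^sup>2 + c * q\<^sup>2)"
    using zero_le_power2[of "p - c * q"] by (simp add: power2_eq_square algebra_simps)
  finally have "m * (p + q)\<^sup>2 \<le> p\<^sup>2 + c * q\<^sup>2"
    by (rule mult_left_le_imp_le) (use c in simp)
  moreover have "m * r\<^sup>2 \<le> m * (p + q)\<^sup>2"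
    using tri m by (intro mult_left_mono power_mono) auto
  ultimately show ?thesis unfolding m_def by linarith
qed

lemma integral_le_if_nn_integral_le:
  fixes u :: "'a \<Rightarrow> real"
  assumes u: "u \<in> borel_measurable M" "\<And>x. 0 \<le> u x"
    and bound: "(\<integral>\<^sup>+ x. ennreal (u x) \<partial>M) \<le> ennreal c" and c: "0 \<le> c"
  shows "integrable M u" and "(\<integral>x. u x \<partial>M) \<le> c"
proof -
  show int: "integrable M u"
    unfolding integrable_iff_bounded using u bound by (simp add: order_le_less_trans)
  have "ennreal (\<integral>x. u x \<partial>M) = (\<integral>\<^sup>+ x. ennreal (u x) \<partial>M)"
    using int u by (simp add: nn_integral_eq_integral)
  with bound have "ennreal (\<integral>x. u x \<partial>M) \<le> ennreal c" by simp
  with c show "(\<integral>x. u x \<partial>M) \<le> c" by simp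
qed

text \<open>Only an inequality, because the integrand need not be measurable: Tonelli is applied to
  the simple minorants that define the integral on the left.\<close>
lemma nn_integral_PiM_insert_le:
  fixes k :: nat
  assumes "prob_space D"
  shows "(\<integral>\<^sup>+ x. u x \<partial>PiM (insert k {..<k}) (\<lambda>_. D))
     \<le> (\<integral>\<^sup>+ x. (\<integral>\<^sup>+ y. u (x(k := y)) \<partial>D) \<partial>PiM {..<k} (\<lambda>_. D))"
proof -
  interpret product_sigma_finite "\<lambda>_::nat. D"
    by (simp add: product_sigma_finite_def prob_space_imp_sigma_finite assms)
  show ?thesis
    unfolding nn_integral_def[of "PiM (insert k {..<k}) (\<lambda>_. D)" u]
  proof (rule SUP_least, clarify)
    fix s assume s: "simple_function (PiM (insert k {..<k}) (\<lambda>_. D)) s" "s \<le> u"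
    have "integral\<^sup>S (PiM (insert k {..<k}) (\<lambda>_. D)) s = integral\<^sup>N (PiM (insert k {..<k}) (\<lambda>_. D)) s"
      using s by (simp add: nn_integral_eq_simple_integral)
    also have "\<dots> = (\<integral>\<^sup>+ x. (\<integral>\<^sup>+ y. s (x(k := y)) \<partial>D) \<partial>PiM {..<k} (\<lambda>_. D))"
      using product_nn_integral_insert[of "{..<k}" k s] s
      by (simp add: borel_measurable_simple_function)
    also have "\<dots> \<le> (\<integral>\<^sup>+ x. (\<integral>\<^sup>+ y. u (x(k := y)) \<partial>D) \<partial>PiM {..<k} (\<lambda>_. D))"
      using s(2) by (intro nn_integral_mono) (auto simp: le_fun_def)
    finally show "integral\<^sup>S (PiM (insert k {..<k}) (\<lambda>_. D)) s
       \<le> (\<integral>\<^sup>+ x. (\<integral>\<^sup>+ y. u (x(k := y)) \<partial>D) \<partial>PiM {..<k} (\<lambda>_. D))" .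
  qed
qed

text \<open>Needs no measurability of \<open>u\<close>: the simple minorants of \<open>a u + c\<close> are turned into simple
  minorants of \<open>u\<close>.\<close>
lemma nn_integral_affine_le:
  assumes M: "prob_space M" and a: "a > 0" and c: "c < top"
  shows "(\<integral>\<^sup>+ x. ennreal a * u x + c \<partial>M) \<le> ennreal a * integral\<^sup>N M u + c"
  unfolding nn_integral_def[of M "\<lambda>x. ennreal a * u x + c"]
proof (rule SUP_least, clarify)
  interpret prob_space M by (rule M)
  fix s assume s: "simple_function M s" "s \<le> (\<lambda>x. ennreal a * u x + c)"
  define t where "t x = (s x - c) * ennreal (1 / a)" for x
  have t: "simple_function M t"
    using s(1) unfolding t_def by (rule simple_function_compose1[where g = "\<lambda>v. (v - c) * _"])
  have inv: "ennreal a * ennreal (1 / a) = 1" using a by (simp flip: ennreal_mult)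
  have a_t: "ennreal a * t x = s x - c" for x
    unfolding t_def using inv by (metis mult.commute mult.left_commute mult_1)
  have "t x \<le> u x" for x
  proof -
    have "s x - c \<le> ennreal a * u x"
      using s(2) c by (auto simp: le_fun_def ennreal_minus_le_iff add.commute)
    then have "(s x - c) * ennreal (1 / a) \<le> ennreal a * u x * ennreal (1 / a)"
      by (rule mult_right_mono) simp
    then show ?thesis unfolding t_def using inv by (metis mult.commute mult.left_commute mult_1)
  qed
  then have "integral\<^sup>N M t \<le> integral\<^sup>N M u" by (intro nn_integral_mono) auto
  have "s x \<le> ennreal a * t x + c" for x
    unfolding a_t using c by (metis add.commute diff_le_self_ennreal ennreal_minus_le_iff order_refl)
  then have "integral\<^sup>S M s \<le> integral\<^sup>S M (\<lambda>x. ennreal a * t x + c)"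
    using s(1) t by (intro simple_integral_mono) auto
  also have "\<dots> = ennreal a * integral\<^sup>N M t + c"
    using t by (subst simple_integral_add) (auto simp: emeasure_space_1 nn_integral_eq_simple_integral)
  also have "\<dots> \<le> ennreal a * integral\<^sup>N M u + c"
    using \<open>integral\<^sup>N M t \<le> integral\<^sup>N M u\<close> by (intro add_right_mono mult_left_mono) auto
  finally show "integral\<^sup>S M s \<le> ennreal a * integral\<^sup>N M u + c" .
qed

lemma sppm_fun_upd_eq: "j \<le> k \<Longrightarrow> sppm \<gamma> f x0 (w(k := e)) j = sppm \<gamma> f x0 w j"
  by (induction j) auto

lemma sppm_expected_sq_dist_le:
  fixes f :: "'b \<Rightarrow> 'a::real_normed_vector \<Rightarrow> real"
  assumes D: "prob_space D" and R: "R > 0" and C: "C \<ge> 0"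
    and step: "\<And>x. (\<integral>\<^sup>+ \<xi>. ennreal ((norm (prox \<gamma> (f \<xi>) x - u))\<^sup>2) \<partial>D)
      \<le> ennreal (R * (norm (x - u))\<^sup>2 + C)"
  shows "(\<integral>\<^sup>+ w. ennreal ((norm (sppm \<gamma> f x0 w k - u))\<^sup>2) \<partial>PiM {..<k} (\<lambda>_. D))
      \<le> ennreal (R ^ k * (norm (x0 - u))\<^sup>2 + C * (\<Sum>i<k. R ^ i))"
proof (induction k)
  case 0
  interpret prob_space "PiM {} (\<lambda>_. D)" by (rule prob_space_PiM) (use D in auto)
  show ?case by (simp add: emeasure_space_1)
next
  case (Suc k)
  let ?E = "\<lambda>k. \<integral>\<^sup>+ w. ennreal ((norm (sppm \<gamma> f x0 w k - u))\<^sup>2) \<partial>PiM {..<k} (\<lambda>_. D)"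
  have "?E (Suc k) = (\<integral>\<^sup>+ w. ennreal ((norm (sppm \<gamma> f x0 w (Suc k) - u))\<^sup>2)
      \<partial>PiM (insert k {..<k}) (\<lambda>_. D))"
    by (simp add: lessThan_Suc)
  also have "\<dots> \<le> (\<integral>\<^sup>+ w. (\<integral>\<^sup>+ \<xi>. ennreal ((norm (sppm \<gamma> f x0 (w(k := \<xi>)) (Suc k) - u))\<^sup>2) \<partial>D)
      \<partial>PiM {..<k} (\<lambda>_. D))"
    by (rule nn_integral_PiM_insert_le[OF D])
  also have "\<dots> = (\<integral>\<^sup>+ w. (\<integral>\<^sup>+ \<xi>. ennreal ((norm (prox \<gamma> (f \<xi>) (sppm \<gamma> f x0 w k) - u))\<^sup>2) \<partial>D)
      \<partial>PiM {..<k} (\<lambda>_. D))"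
    by (simp add: sppm_fun_upd_eq)
  also have "\<dots> \<le> (\<integral>\<^sup>+ w. ennreal R * ennreal ((norm (sppm \<gamma> f x0 w k - u))\<^sup>2) + ennreal C
      \<partial>PiM {..<k} (\<lambda>_. D))"
    using step R C by (intro nn_integral_mono) (simp add: ennreal_mult)
  also have "\<dots> \<le> ennreal R * ?E k + ennreal C"
    by (rule nn_integral_affine_le[OF prob_space_PiM R]) (use D in auto)
  also have "\<dots> \<le> ennreal R * ennreal (R ^ k * (norm (x0 - u))\<^sup>2 + C * (\<Sum>i<k. R ^ i)) + ennreal C"
    using Suc.IH by (intro add_right_mono mult_left_mono) auto
  also have "\<dots> = ennreal (R * (R ^ k * (norm (x0 - u))\<^sup>2 + C * (\<Sum>i<k. R ^ i)) + C)"
    using R C by (simp add: ennreal_mult sum_nonneg)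
  also have "R * (R ^ k * (norm (x0 - u))\<^sup>2 + C * (\<Sum>i<k. R ^ i)) + C
      = R ^ Suc k * (norm (x0 - u))\<^sup>2 + C * (\<Sum>i<Suc k. R ^ i)"
    by (simp add: algebra_simps sum_distrib_left lessThan_Suc_eq_insert_0 sum.reindex
        flip: power_Suc)
  finally show ?case .
qed

lemma geometric_sum_le_inverse:
  fixes \<rho> :: real
  assumes "0 < \<rho>" "\<rho> \<le> 1"
  shows "(\<Sum>i<k. (1 - \<rho>) ^ i) \<le> 1 / \<rho>"
proof -
  have "(\<Sum>i<k. (1 - \<rho>) ^ i) = (1 - (1 - \<rho>) ^ k) / \<rho>"
    using assms by (subst sum_gp_strict) auto
  also have "\<dots> \<le> 1 / \<rho>"
    using assms by (intro divide_right_mono) auto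
  finally show ?thesis .
qed

lemma two_div_half_min_one:
  fixes c :: real
  assumes "c > 0"
  shows "2 / (1/2 * min c 1) = 4 * max (1 / c) 1"
  using assms by (cases "c \<le> 1") (auto simp: min_def max_def field_simps)

locale sppm_star_similarity = prob_space D
  for D :: "'b measure"
    and f :: "'b \<Rightarrow> 'a::euclidean_space \<Rightarrow> real"
    and g :: "'b \<Rightarrow> 'a \<Rightarrow> 'a"
    and F :: "'a \<Rightarrow> real"
    and G :: "'a \<Rightarrow> 'a"
    and \<mu> \<delta> \<sigma> \<gamma> :: real
    and xs :: 'a +
  assumes F_def: "\<And>x. integrable D (\<lambda>\<xi>. f \<xi> x) \<and> F x = (\<integral>\<xi>. f \<xi> x \<partial>D)"
    and G_def: "\<And>x. integrable D (\<lambda>\<xi>. g \<xi> x) \<and> G x = (\<integral>\<xi>. g \<xi> x \<partial>D)"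
    and F_grad: "\<And>x. GDERIV F x :> G x"
    and A1: "AE \<xi> in D. \<forall>x. GDERIV (f \<xi>) x :> g \<xi> x"
    and A2: "AE \<xi> in D. convex_on UNIV (f \<xi>)"
    and A3: "\<And>x y. F x \<ge> F y + inner (G y) (x - y) + \<mu> / 2 * (norm (x - y))\<^sup>2"
    and xs_min: "\<And>x. F xs \<le> F x"
    and \<delta>_pos: "\<delta> > 0"
    and SS: "\<And>x. (\<integral>\<^sup>+ \<xi>. ennreal ((norm (g \<xi> x - G x - g \<xi> xs))\<^sup>2) \<partial>D)
                    \<le> ennreal (\<delta>\<^sup>2 * (norm (x - xs))\<^sup>2)"
    and BV: "(\<integral>\<^sup>+ \<xi>. ennreal ((norm (g \<xi> xs))\<^sup>2) \<partial>D) \<le> ennreal (\<sigma>\<^sup>2)"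
    and \<gamma>_pos: "0 < \<gamma>"
    and \<gamma>_le: "\<gamma> \<le> \<mu> / (4 * \<delta>\<^sup>2)"
begin

lemma \<gamma>_\<delta>_le_\<mu>: "\<gamma> * (4 * \<delta>\<^sup>2) \<le> \<mu>"
  using \<gamma>_le \<delta>_pos by (simp add: pos_le_divide_eq)

lemma \<mu>_pos: "\<mu> > 0"
proof -
  have "0 < \<gamma> * (4 * \<delta>\<^sup>2)" using \<gamma>_pos \<delta>_pos by simp
  with \<gamma>_\<delta>_le_\<mu> show ?thesis by linarith
qed

lemma G_xs: "G xs = 0"
  using gradient_eq_0_at_min[of F "G xs" xs] F_grad[of xs] xs_min by (simp add: gderiv_def)

lemma expected_gradient_noise_le:
  shows "integrable D (\<lambda>\<xi>. (norm (g \<xi> z - G z))\<^sup>2)"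
    and "(\<integral>\<xi>. (norm (g \<xi> z - G z))\<^sup>2 \<partial>D) \<le> 2 * \<delta>\<^sup>2 * (norm (z - xs))\<^sup>2 + 2 * \<sigma>\<^sup>2"
proof -
  have meas: "(\<lambda>\<xi>. g \<xi> w) \<in> borel_measurable D" for w
    using G_def by (simp add: borel_measurable_integrable)
  have SS_z: "integrable D (\<lambda>\<xi>. (norm (g \<xi> z - G z - g \<xi> xs))\<^sup>2)"
    "(\<integral>\<xi>. (norm (g \<xi> z - G z - g \<xi> xs))\<^sup>2 \<partial>D) \<le> \<delta>\<^sup>2 * (norm (z - xs))\<^sup>2"
    using integral_le_if_nn_integral_le[OF _ _ SS[of z]] meas[of z] meas[of xs] by auto
  have BV': "integrable D (\<lambda>\<xi>. (norm (g \<xi> xs))\<^sup>2)" "(\<integral>\<xi>. (norm (g \<xi> xs))\<^sup>2 \<partial>D) \<le> \<sigma>\<^sup>2"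
    using integral_le_if_nn_integral_le[OF _ _ BV] meas[of xs] by auto
  have split: "(norm (g \<xi> z - G z))\<^sup>2 \<le> 2 * (norm (g \<xi> z - G z - g \<xi> xs))\<^sup>2 + 2 * (norm (g \<xi> xs))\<^sup>2"
    for \<xi> using power2_norm_add_le[of "g \<xi> z - G z - g \<xi> xs" "g \<xi> xs"] by simp
  have int_split: "integrable D (\<lambda>\<xi>. 2 * (norm (g \<xi> z - G z - g \<xi> xs))\<^sup>2 + 2 * (norm (g \<xi> xs))\<^sup>2)"
    using SS_z(1) BV'(1) by simp
  have "(\<lambda>\<xi>. (norm (g \<xi> z - G z))\<^sup>2) \<in> borel_measurable D"
    using meas[of z] by measurable
  from Bochner_Integration.integrable_bound[OF int_split this]
  show int: "integrable D (\<lambda>\<xi>. (norm (g \<xi> z - G z))\<^sup>2)"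
    using split by (auto intro!: AE_I2)
  have "(\<integral>\<xi>. (norm (g \<xi> z - G z))\<^sup>2 \<partial>D)
      \<le> (\<integral>\<xi>. 2 * (norm (g \<xi> z - G z - g \<xi> xs))\<^sup>2 + 2 * (norm (g \<xi> xs))\<^sup>2 \<partial>D)"
    using int int_split split by (intro integral_mono) auto
  also have "\<dots> = 2 * (\<integral>\<xi>. (norm (g \<xi> z - G z - g \<xi> xs))\<^sup>2 \<partial>D) + 2 * (\<integral>\<xi>. (norm (g \<xi> xs))\<^sup>2 \<partial>D)"
    using SS_z(1) BV'(1) by simp
  finally show "(\<integral>\<xi>. (norm (g \<xi> z - G z))\<^sup>2 \<partial>D) \<le> 2 * \<delta>\<^sup>2 * (norm (z - xs))\<^sup>2 + 2 * \<sigma>\<^sup>2"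
    using SS_z(2) BV'(2) by linarith
qed

lemma F_prox_exists:
  obtains z where "G z = (1 / \<gamma>) *\<^sub>R (x - z)"
proof -
  have "continuous_on UNIV F"
    using F_grad unfolding gderiv_def by (meson continuous_at_imp_continuous_on has_derivative_continuous)
  moreover have "F x + inner (w - x) (G x) \<le> F w" for w
  proof -
    have "0 \<le> \<mu> / 2 * (norm (w - x))\<^sup>2" using \<mu>_pos by simp
    then show ?thesis using A3[where x = w and y = x] inner_commute[of "G x" "w - x"] by linarith
  qed
  ultimately obtain z where "\<And>w. F z + (norm (z - x))\<^sup>2 / (2 * \<gamma>) \<le> F w + (norm (w - x))\<^sup>2 / (2 * \<gamma>)"
    using prox_objective_attains_min[OF _ _ \<gamma>_pos] by blast
  with prox_optimality_condition[OF F_grad[unfolded gderiv_def] \<gamma>_pos] that show ?thesis by blast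
qed


lemma expected_prox_step_le:
  "(\<integral>\<^sup>+ \<xi>. ennreal ((norm (prox \<gamma> (f \<xi>) x - xs))\<^sup>2) \<partial>D)
     \<le> ennreal ((1 - 1/2 * min (\<gamma> * \<mu> / 2) 1) * (norm (x - xs))\<^sup>2 + 2 * \<gamma>\<^sup>2 * \<sigma>\<^sup>2)"
proof -
  obtain z where Gz: "G z = (1 / \<gamma>) *\<^sub>R (x - z)" by (rule F_prox_exists)
  define P where "P \<xi> = (norm (x - xs))\<^sup>2 - (norm (x - z))\<^sup>2 - 2 * \<gamma> * (f \<xi> z - f \<xi> xs)
      + \<gamma>\<^sup>2 * (norm (g \<xi> z - G z))\<^sup>2" for \<xi>
  have pointwise: "AE \<xi> in D. (norm (prox \<gamma> (f \<xi>) x - xs))\<^sup>2 \<le> P \<xi>"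
    using A1 A2
  proof eventually_elim
    case (elim \<xi>)
    have der: "\<And>v. (f \<xi> has_derivative (\<lambda>w. inner w (g \<xi> v))) (at v)"
      using elim(1) by (simp add: gderiv_def)
    have "\<gamma> *\<^sub>R g \<xi> z - (x - z) = \<gamma> *\<^sub>R (g \<xi> z - G z)"
      using \<gamma>_pos by (simp add: Gz algebra_simps)
    then show ?case
      using prox_sq_dist_le[OF elim(2) der \<gamma>_pos, of x xs z] \<gamma>_pos
      by (simp add: P_def power_mult_distrib)
  qed
  note noise = expected_gradient_noise_le[of z]
  have "integrable D P" unfolding P_def using F_def noise(1) by simp
  have "(\<integral>\<xi>. P \<xi> \<partial>D) = (norm (x - xs))\<^sup>2 - (norm (x - z))\<^sup>2 - 2 * \<gamma> * (F z - F xs)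
      + \<gamma>\<^sup>2 * (\<integral>\<xi>. (norm (g \<xi> z - G z))\<^sup>2 \<partial>D)"
    unfolding P_def using F_def[of z] F_def[of xs] noise(1) by (simp add: prob_space)
  also have "\<dots> \<le> (1 - 1/2 * min (\<gamma> * \<mu> / 2) 1) * (norm (x - xs))\<^sup>2 + 2 * \<gamma>\<^sup>2 * \<sigma>\<^sup>2"
  proof -
    have "\<gamma> * \<mu> * (norm (z - xs))\<^sup>2 \<le> 2 * \<gamma> * (F z - F xs)"
      using mult_left_mono[OF A3[where x = z and y = xs], of "2 * \<gamma>"] G_xs \<gamma>_pos
      by (simp add: algebra_simps)
    moreover have "\<gamma>\<^sup>2 * (\<integral>\<xi>. (norm (g \<xi> z - G z))\<^sup>2 \<partial>D)
        \<le> \<gamma>\<^sup>2 * (2 * \<delta>\<^sup>2 * (norm (z - xs))\<^sup>2 + 2 * \<sigma>\<^sup>2)"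
      using noise(2) by (rule mult_left_mono) simp
    moreover have "\<gamma>\<^sup>2 * (2 * \<delta>\<^sup>2 * (norm (z - xs))\<^sup>2) \<le> \<gamma> * \<mu> / 2 * (norm (z - xs))\<^sup>2"
      using mult_right_mono[OF \<gamma>_\<delta>_le_\<mu>, of "\<gamma> * (norm (z - xs))\<^sup>2 / 2"] \<gamma>_pos
      by (simp add: power2_eq_square algebra_simps)
    moreover have "1/2 * min (\<gamma> * \<mu> / 2) 1 * (norm (x - xs))\<^sup>2
        \<le> (norm (x - z))\<^sup>2 + \<gamma> * \<mu> / 2 * (norm (z - xs))\<^sup>2"
      using norm_triangle_ineq[of "x - z" "z - xs"] \<gamma>_pos \<mu>_pos
      by (intro weighted_triangle_sq_bound) auto
    ultimately show ?thesis by (simp add: algebra_simps)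
  qed
  finally have EP: "(\<integral>\<xi>. P \<xi> \<partial>D) \<le> (1 - 1/2 * min (\<gamma> * \<mu> / 2) 1) * (norm (x - xs))\<^sup>2 + 2 * \<gamma>\<^sup>2 * \<sigma>\<^sup>2" .
  have "(\<integral>\<^sup>+ \<xi>. ennreal ((norm (prox \<gamma> (f \<xi>) x - xs))\<^sup>2) \<partial>D) \<le> (\<integral>\<^sup>+ \<xi>. ennreal (P \<xi>) \<partial>D)"
    using pointwise by (intro nn_integral_mono_AE) (auto elim!: eventually_mono intro: ennreal_leI)
  also have "\<dots> = ennreal (\<integral>\<xi>. P \<xi> \<partial>D)"
    using \<open>integrable D P\<close> pointwise
    by (intro nn_integral_eq_integral) (auto elim!: eventually_mono intro: order_trans[OF zero_le_power2])
  also have "\<dots> \<le> ennreal ((1 - 1/2 * min (\<gamma> * \<mu> / 2) 1) * (norm (x - xs))\<^sup>2 + 2 * \<gamma>\<^sup>2 * \<sigma>\<^sup>2)"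
    using EP by (rule ennreal_leI)
  finally show ?thesis .
qed

end

theorem theorem6p3:
  fixes D :: "'b measure"
    and f :: "'b \<Rightarrow> 'a::euclidean_space \<Rightarrow> real"
    and g :: "'b \<Rightarrow> 'a \<Rightarrow> 'a"
    and F :: "'a \<Rightarrow> real"
    and G :: "'a \<Rightarrow> 'a"
    and \<mu> \<delta> \<sigma> \<gamma> :: real
    and xs x0 :: 'a
  assumes D: "prob_space D"
    and f_meas: "(\<lambda>(\<xi>, x). f \<xi> x) \<in> borel_measurable (D \<Otimes>\<^sub>M borel)"
    and F_def: "\<And>x. integrable D (\<lambda>\<xi>. f \<xi> x) \<and> F x = (\<integral>\<xi>. f \<xi> x \<partial>D)"
    and G_def: "\<And>x. integrable D (\<lambda>\<xi>. g \<xi> x) \<and> G x = (\<integral>\<xi>. g \<xi> x \<partial>D)"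
    and F_grad: "\<And>x. GDERIV F x :> G x"
    and A1: "AE \<xi> in D. \<forall>x. GDERIV (f \<xi>) x :> g \<xi> x"
    and A2: "AE \<xi> in D. convex_on UNIV (f \<xi>)"
    and A3: "\<And>x y. F x \<ge> F y + inner (G y) (x - y) + \<mu> / 2 * (norm (x - y))\<^sup>2"
    and xs_min: "\<And>x. F xs \<le> F x"
    and \<delta>_pos: "\<delta> > 0"
    and SS: "\<And>x. (\<integral>\<^sup>+ \<xi>. ennreal ((norm (g \<xi> x - G x - g \<xi> xs))\<^sup>2) \<partial>D)
                    \<le> ennreal (\<delta>\<^sup>2 * (norm (x - xs))\<^sup>2)"
    and BV: "(\<integral>\<^sup>+ \<xi>. ennreal ((norm (g \<xi> xs))\<^sup>2) \<partial>D) \<le> ennreal (\<sigma>\<^sup>2)"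
    and \<gamma>_pos: "0 < \<gamma>"
    and \<gamma>_le: "\<gamma> \<le> \<mu> / (4 * \<delta>\<^sup>2)"
  shows "(\<integral>\<^sup>+ \<omega>. ennreal ((norm (sppm \<gamma> f x0 \<omega> k - xs))\<^sup>2) \<partial>(PiM {..<k} (\<lambda>_. D)))
           \<le> ennreal ((1 - 1/2 * min (\<gamma> * \<mu> / 2) 1) ^ k * (norm (x0 - xs))\<^sup>2
                      + 4 * max (2 / (\<gamma> * \<mu>)) 1 * \<gamma>\<^sup>2 * \<sigma>\<^sup>2)"
proof -
  interpret sppm_star_similarity D f g F G \<mu> \<delta> \<sigma> \<gamma> xs
    by (intro sppm_star_similarity.intro sppm_star_similarity_axioms.intro D) (rule assms)+
  define \<rho> where "\<rho> = 1/2 * min (\<gamma> * \<mu> / 2) 1"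
  have \<rho>: "0 < \<rho>" "\<rho> \<le> 1/2" unfolding \<rho>_def using \<gamma>_pos \<mu>_pos by auto
  have "2 * \<gamma>\<^sup>2 * \<sigma>\<^sup>2 * (\<Sum>i<k. (1 - \<rho>) ^ i) \<le> 2 / \<rho> * (\<gamma>\<^sup>2 * \<sigma>\<^sup>2)"
    using mult_left_mono[OF geometric_sum_le_inverse[OF \<rho>(1)], of "2 * \<gamma>\<^sup>2 * \<sigma>\<^sup>2" k] \<rho> by simp
  also have "2 / \<rho> = 4 * max (2 / (\<gamma> * \<mu>)) 1"
    using two_div_half_min_one[of "\<gamma> * \<mu> / 2"] \<gamma>_pos \<mu>_pos unfolding \<rho>_def by simp
  finally have noise_sum: "2 * \<gamma>\<^sup>2 * \<sigma>\<^sup>2 * (\<Sum>i<k. (1 - \<rho>) ^ i) \<le> 4 * max (2 / (\<gamma> * \<mu>)) 1 * \<gamma>\<^sup>2 * \<sigma>\<^sup>2"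
    by (simp add: mult.assoc)
  have "(\<integral>\<^sup>+ \<omega>. ennreal ((norm (sppm \<gamma> f x0 \<omega> k - xs))\<^sup>2) \<partial>(PiM {..<k} (\<lambda>_. D)))
      \<le> ennreal ((1 - \<rho>) ^ k * (norm (x0 - xs))\<^sup>2 + 2 * \<gamma>\<^sup>2 * \<sigma>\<^sup>2 * (\<Sum>i<k. (1 - \<rho>) ^ i))"
    using \<rho> by (intro sppm_expected_sq_dist_le[OF D] expected_prox_step_le[folded \<rho>_def]) auto
  also have "\<dots> \<le> ennreal ((1 - \<rho>) ^ k * (norm (x0 - xs))\<^sup>2 + 4 * max (2 / (\<gamma> * \<mu>)) 1 * \<gamma>\<^sup>2 * \<sigma>\<^sup>2)"
    using noise_sum by (intro ennreal_leI) simp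
  finally show ?thesis unfolding \<rho>_def .
qed

end
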